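(* Let $p$ be a prime and let $a_p$ be a $p$-th Fourier coefficient. Then: (a) $(p+1+a_p)(p+1-a_p)$ is a unit in $\bar{\mathbb Z}$ if and only if $p=2$ and $a_2^2=8$; (b) if $p>3$, then neither $p+1+a_p$ nor $p+1-a_p$ is a unit in $\bar{\mathbb Z}$.
   Context: $\bar{\mathbb Z}$ is the ring of algebraic integers. For a prime $p$, an element $a_p\in\bar{\mathbb Q}$ is called a $p$-th Fourier coefficient if (i) $a_p\in\bar{\mathbb Z}$, (ii) $a_p$ is totally real (its minimal polynomial over $\mathbb Q$ splits over $\mathbb R$), and (iii) $|\sigma(a_p)|\le 2\sqrt p$ for every embedding $\sigma:\mathbb Q(a_p)\hookrightarrow\mathbb R$. *)

theory Defs
  imports Complex_Main "HOL-Computational_Algebra.Computational_Algebra"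
begin

definition alg_int :: "complex \<Rightarrow> bool" where
  "alg_int x \<longleftrightarrow> (\<exists>f :: int poly. lead_coeff f = 1 \<and> poly (map_poly of_int f) x = 0)"

definition alg_int_unit :: "complex \<Rightarrow> bool" where
  "alg_int_unit x \<longleftrightarrow> alg_int x \<and> x \<noteq> 0 \<and> alg_int (1 / x)"

text \<open>b is a (Galois) conjugate of a over Q: both are roots of the same
  irreducible rational polynomial, i.e. b is a root of the minimal polynomial of a.\<close>
definition conjugate :: "complex \<Rightarrow> complex \<Rightarrow> bool" where
  "conjugate a b \<longleftrightarrow> (\<exists>q :: rat poly. irreducible q \<and>
      poly (map_poly of_rat q) a = 0 \<and> poly (map_poly of_rat q) b = 0)"

text \<open>p-th Fourier coefficient: algebraic integer, totally real (all roots of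
  the minimal polynomial are real), and every real embedding sigma satisfies
  abs(sigma a) \<le> 2 sqrt p (the values sigma a are exactly the real conjugates).\<close>
definition fourier_coeff :: "nat \<Rightarrow> complex \<Rightarrow> bool" where
  "fourier_coeff p a \<longleftrightarrow> alg_int a \<and>
     (\<forall>b. conjugate a b \<longrightarrow> b \<in> \<real>) \<and>
     (\<forall>b. conjugate a b \<longrightarrow> b \<in> \<real> \<longrightarrow> cmod b \<le> 2 * sqrt (real p))"

end

theory Submission imports Defs "Berlekamp_Zassenhaus.Factor_Bound" begin

(* Let m be the minimal polynomial of a; by Gauss's lemma it is a monic integer polynomial, and
   its roots are the conjugates b of a, all real with |b| <= 2 sqrt p.  If P(a) is a unit for
   some P in Z[x] with an integer root t, then m(t) = +-1: a polynomial r in Z[x] with r(0) = 1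
   kills P(a) (reverse the monic polynomial of 1/P(a)), so m divides r o P in Z[x], whose value
   at t is 1.  But |m(t)| is the product of |t - b| over the roots b.  For t = +-(p+1) and p >= 5
   every factor is at least p + 1 - 2 sqrt p > 1, which gives (b).  For (a), take
   P = (p+1)^2 - x^2: then |m(p+1) m(-(p+1))| = 1 is the product of the |(p+1)^2 - b^2|, each at
   least (p-1)^2 >= 1, so (p+1)^2 - a^2 <= 1; together with a^2 <= 4p this forces p = 2 and
   a^2 = 8. *)

definition int_min_poly :: "complex \<Rightarrow> int poly \<Rightarrow> bool" where
  "int_min_poly a m \<longleftrightarrow>
     lead_coeff m = 1 \<and> poly (of_int_poly m) a = 0 \<and> irreducible (of_int_poly m :: rat poly)"

lemma monic_least_degree_irreducible\<^sub>d:
  fixes m :: "int poly" and a :: "'a :: idom"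
  assumes monic: "lead_coeff m = 1" and root: "poly (of_int_poly m) a = 0"
    and least: "\<And>g. lead_coeff g = 1 \<Longrightarrow> poly (of_int_poly g) a = 0 \<Longrightarrow>
                       degree m \<le> degree g"
  shows "irreducible\<^sub>d m"
proof (rule irreducible\<^sub>dI)
  show "degree m > 0"
  proof (rule ccontr)
    assume "\<not> degree m > 0"
    with monic have "m = 1" by (metis degree_eq_zeroE lead_coeff_pCons(2) neq0_conv one_poly_eq_simps(2))
    with root show False by simp
  qed
next
  have factor_degree: "degree m \<le> degree g"
    if "g dvd m" and "poly (of_int_poly g) a = 0" for g :: "int poly"
  proof -
    from \<open>g dvd m\<close> have "lead_coeff g dvd 1" using monic by (metis dvd_def lead_coeff_mult)
    hence unit: "lead_coeff g * lead_coeff g = 1" by (metis zdvd1_eq abs_mult_self_eq mult_1_left)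
    have "degree m \<le> degree (Polynomial.smult (lead_coeff g) g)"
    proof (rule least)
      show "lead_coeff (Polynomial.smult (lead_coeff g) g) = 1" using unit by (cases "g = 0") auto
      show "poly (of_int_poly (Polynomial.smult (lead_coeff g) g)) a = 0"
        using that(2) by (simp add: of_int_hom.map_poly_hom_smult)
    qed
    thus ?thesis using unit by (cases "g = 0") auto
  qed
  fix q r :: "int poly"
  assume "degree q < degree m" "degree r < degree m" "m = q * r"
  moreover have "poly (of_int_poly q) a = 0 \<or> poly (of_int_poly r) a = 0"
    using root \<open>m = q * r\<close> by (simp add: of_int_poly_hom.hom_mult)
  ultimately show False using factor_degree by (metis dvd_triv_left dvd_triv_right not_le)
qed

interpretation of_rat_poly_hom: map_poly_comm_ring_hom "of_rat :: rat \<Rightarrow> 'a :: field_char_0" ..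

lemma irreducible_dvd_if_common_root:
  fixes q r :: "rat poly" and a :: "'a :: field_char_0"
  assumes "irreducible q" and "poly (map_poly of_rat q) a = 0" and "poly (map_poly of_rat r) a = 0"
  shows "q dvd r"
proof (rule ccontr)
  assume "\<not> q dvd r"
  with \<open>irreducible q\<close> have "coprime q r"
    by (simp add: irreducible_imp_prime_elem prime_elem_imp_coprime)
  hence "fst (bezout_coefficients q r) * q + snd (bezout_coefficients q r) * r = 1"
    using bezout_coefficients_fst_snd[of q r] by simp
  from arg_cong[OF this, of "\<lambda>s. poly (map_poly of_rat s) a"] show False
    using assms(2,3) by (simp add: of_rat_poly_hom.hom_add of_rat_poly_hom.hom_mult)
qed

lemma monic_int_poly_dvd_if_rat_dvd:
  fixes m s :: "int poly"
  assumes monic: "lead_coeff m = 1" and dvd: "(of_int_poly m :: rat poly) dvd of_int_poly s"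
  shows "m dvd s"
proof -
  obtain q r where div: "pseudo_divmod s m = (q, r)" by (cases "pseudo_divmod s m")
  have "m \<noteq> 0" using monic by auto
  have s: "s = m * q + r" using pseudo_divmod(1)[OF \<open>m \<noteq> 0\<close> div] monic by simp
  have "(of_int_poly m :: rat poly) dvd of_int_poly r"
  proof -
    have "(of_int_poly r :: rat poly) = of_int_poly s - of_int_poly m * of_int_poly q"
      unfolding s by (simp add: of_int_poly_hom.hom_add of_int_poly_hom.hom_mult)
    thus ?thesis using dvd by simp
  qed
  moreover have "r = 0 \<or> degree r < degree m" by (rule pseudo_divmod(2)[OF \<open>m \<noteq> 0\<close> div])
  ultimately have "r = 0" by (auto dest: dvd_imp_degree_le)
  thus ?thesis using s by simp
qed

lemma alg_int_imp_int_min_poly: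
  assumes "alg_int a"
  obtains m where "int_min_poly a m"
proof -
  let ?monic_root = "\<lambda>g :: int poly. lead_coeff g = 1 \<and> poly (of_int_poly g) a = 0"
  obtain f where "?monic_root f" using assms unfolding alg_int_def by blast
  then obtain m where m: "?monic_root m"
    and least: "\<And>g. ?monic_root g \<Longrightarrow> degree m \<le> degree g"
    using ex_has_least_nat[of ?monic_root f degree] by blast
  have "irreducible\<^sub>d m" using m least by (intro monic_least_degree_irreducible\<^sub>d) auto
  hence "irreducible (of_int_poly m :: rat poly)" using irreducible\<^sub>d_int_rat by simp
  with m show ?thesis by (intro that[of m]) (simp add: int_min_poly_def)
qed

lemma map_poly_of_rat_of_int: "map_poly of_rat (of_int_poly f :: rat poly) = of_int_poly f"
  by (simp add: map_poly_map_poly o_def)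

lemma int_min_poly_dvd:
  assumes "int_min_poly a m" and "poly (of_int_poly s) a = 0"
  shows "m dvd s"
proof (rule monic_int_poly_dvd_if_rat_dvd)
  show "lead_coeff m = 1" using assms(1) by (simp add: int_min_poly_def)
  show "(of_int_poly m :: rat poly) dvd of_int_poly s"
    using assms by (intro irreducible_dvd_if_common_root[of _ a])
      (simp_all add: int_min_poly_def map_poly_of_rat_of_int)
qed

lemma int_min_poly_root_imp_conjugate:
  assumes "int_min_poly a m" and "poly (of_int_poly m) b = 0"
  shows "Defs.conjugate a b"
  using assms unfolding int_min_poly_def conjugate_def by (metis map_poly_of_rat_of_int)

lemma alg_int_unit_imp_root_of_poly_at_0_eq_1:
  assumes "alg_int_unit y"
  obtains r :: "int poly" where "poly r 0 = 1" and "poly (of_int_poly r) y = 0"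
proof -
  from assms have "y \<noteq> 0" and "alg_int (1 / y)" unfolding alg_int_unit_def by auto
  then obtain h :: "int poly" where "lead_coeff h = 1" and "poly (of_int_poly h) (1 / y) = 0"
    unfolding alg_int_def by auto
  moreover have "of_int_poly (reflect_poly h) = reflect_poly (of_int_poly h :: complex poly)"
    by (rule poly_eqI) (simp add: coeff_reflect_poly coeff_map_poly)
  ultimately show ?thesis using \<open>y \<noteq> 0\<close>
    by (intro that[of "reflect_poly h"]) (simp_all add: poly_reflect_poly_nz divide_inverse poly_0_coeff_0)
qed

lemma int_min_poly_eval_abs_eq_1_if_unit:
  assumes "int_min_poly a m" and "alg_int_unit (poly (of_int_poly P) a)" and "poly P t = 0"
  shows "\<bar>poly m t\<bar> = 1"
proof -
  obtain r :: "int poly" where "poly r 0 = 1" and "poly (of_int_poly r) (poly (of_int_poly P) a) = 0"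
    using alg_int_unit_imp_root_of_poly_at_0_eq_1[OF assms(2)] by blast
  hence "poly (of_int_poly (r \<circ>\<^sub>p P)) a = 0" and "poly (r \<circ>\<^sub>p P) t = 1"
    using assms(3) by (simp_all add: of_int_hom.map_poly_pcompose poly_pcompose poly_0_coeff_0)
  moreover obtain q where "r \<circ>\<^sub>p P = m * q"
    using int_min_poly_dvd[OF assms(1) \<open>poly (of_int_poly (r \<circ>\<^sub>p P)) a = 0\<close>] by blast
  ultimately have "poly m t * poly q t = 1" by simp
  thus ?thesis using zmult_eq_1_iff by fastforce
qed

lemma norm_poly_monic_eq_prod_roots:
  fixes f :: "complex poly"
  assumes "lead_coeff f = 1"
  shows "cmod (poly f z) = (\<Prod>b | poly f b = 0. cmod (z - b) ^ Polynomial.order b f)"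
proof -
  have "poly f z = poly (\<Prod>b | poly f b = 0. [:-b, 1:] ^ Polynomial.order b f) z"
    using complex_poly_decompose[of f] assms by simp
  also have "\<dots> = (\<Prod>b | poly f b = 0. (z - b) ^ Polynomial.order b f)"
    by (simp add: poly_prod)
  finally show ?thesis by (simp add: prod_norm[symmetric] norm_power)
qed

lemma one_less_norm_poly_monic:
  fixes f :: "complex poly"
  assumes monic: "lead_coeff f = 1" and "poly f a = 0"
    and far: "\<And>b. poly f b = 0 \<Longrightarrow> 1 < cmod (z - b)"
  shows "1 < cmod (poly f z)"
proof -
  have "f \<noteq> 0" using monic by auto
  have "1 < (\<Prod>b | poly f b = 0. cmod (z - b) ^ Polynomial.order b f)"
  proof (rule less_1_prod)
    show "finite {b. poly f b = 0}" using \<open>f \<noteq> 0\<close> by (rule poly_roots_finite)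
    show "{b. poly f b = 0} \<noteq> {}" using \<open>poly f a = 0\<close> by blast
    fix b assume "b \<in> {b. poly f b = 0}"
    hence "Polynomial.order b f \<noteq> 0" and "1 < cmod (z - b)"
      using \<open>f \<noteq> 0\<close> far by (simp_all add: order_root)
    thus "1 < cmod (z - b) ^ Polynomial.order b f" by simp
  qed
  thus ?thesis using norm_poly_monic_eq_prod_roots[OF monic] by simp
qed

lemma norm_diff_squares_le_norm_poly_mult:
  fixes f :: "complex poly"
  assumes monic: "lead_coeff f = 1" and "poly f a = 0"
    and far: "\<And>b. poly f b = 0 \<Longrightarrow> 1 \<le> cmod (z\<^sup>2 - b\<^sup>2)"
  shows "cmod (z\<^sup>2 - a\<^sup>2) \<le> cmod (poly f z * poly f (-z))"
proof -
  define F where "F b = cmod (z\<^sup>2 - b\<^sup>2) ^ Polynomial.order b f" for b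
  have "f \<noteq> 0" using monic by auto
  have F_ge_1: "1 \<le> F b" if "poly f b = 0" for b
    unfolding F_def using far[OF that] by (rule one_le_power)
  have "Polynomial.order a f \<noteq> 0" using \<open>poly f a = 0\<close> \<open>f \<noteq> 0\<close> by (simp add: order_root)
  hence "cmod (z\<^sup>2 - a\<^sup>2) ^ 1 \<le> F a"
    unfolding F_def using far[OF \<open>poly f a = 0\<close>] by (intro power_increasing) auto
  hence "cmod (z\<^sup>2 - a\<^sup>2) \<le> (\<Prod>b\<in>{a}. F b)" by simp
  also have "\<dots> \<le> (\<Prod>b | poly f b = 0. F b)"
    by (rule prod_mono2)
      (use poly_roots_finite[OF \<open>f \<noteq> 0\<close>] F_ge_1 \<open>poly f a = 0\<close> in \<open>auto simp: F_def\<close>)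
  also have "\<dots> = cmod (poly f z * poly f (-z))"
  proof -
    have "cmod (z - b) * cmod (- z - b) = cmod (z\<^sup>2 - b\<^sup>2)" for b
    proof -
      have "(z - b) * (- z - b) = b\<^sup>2 - z\<^sup>2" by (simp add: algebra_simps power2_eq_square)
      thus ?thesis by (metis norm_minus_commute norm_mult)
    qed
    thus ?thesis unfolding norm_mult norm_poly_monic_eq_prod_roots[OF monic] F_def
      by (simp add: prod.distrib[symmetric] power_mult_distrib[symmetric])
  qed
  finally show ?thesis .
qed

lemma fourier_coeff_int_min_poly_root:
  assumes "fourier_coeff p a" and "int_min_poly a m" and "poly (of_int_poly m) b = 0"
  shows "b \<in> \<real>" and "cmod b \<le> 2 * sqrt (real p)"
  using assms int_min_poly_root_imp_conjugate unfolding fourier_coeff_def by blast+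

lemma fourier_coeff_int_min_poly_abs_gt_1:
  assumes "4 < p" and "fourier_coeff p a" and "int_min_poly a m" and "\<bar>t\<bar> = int p + 1"
  shows "1 < \<bar>poly m t\<bar>"
proof -
  have "2 * sqrt (real p) < real p"
  proof -
    have "(2 * sqrt (real p))\<^sup>2 < (real p)\<^sup>2" using \<open>4 < p\<close> by (simp add: power2_eq_square)
    thus ?thesis by (rule power2_less_imp_less) simp
  qed
  have "1 < cmod (of_int t - b)" if "poly (of_int_poly m) b = 0" for b
  proof -
    have "cmod (of_int t) - cmod b \<le> cmod (of_int t - b)" by (rule norm_triangle_ineq2)
    moreover have "cmod (of_int t :: complex) = real p + 1"
      using \<open>\<bar>t\<bar> = int p + 1\<close> unfolding norm_of_int of_int_abs[symmetric] by simp
    ultimately show ?thesis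
      using fourier_coeff_int_min_poly_root(2)[OF assms(2,3) that] \<open>2 * sqrt (real p) < real p\<close>
      by linarith
  qed
  moreover have "lead_coeff (of_int_poly m :: complex poly) = 1" and "poly (of_int_poly m) a = 0"
    using assms(3) by (simp_all add: int_min_poly_def)
  ultimately have "1 < cmod (poly (of_int_poly m) (of_int t))"
    by (intro one_less_norm_poly_monic[of _ a])
  thus ?thesis by simp
qed

lemma fourier_coeff_int_min_poly_abs_eq_1_imp:
  assumes "2 \<le> p" and "fourier_coeff p a" and "int_min_poly a m"
    and "\<bar>poly m (int p + 1)\<bar> = 1" and "\<bar>poly m (- (int p + 1))\<bar> = 1"
  shows "p = 2 \<and> a\<^sup>2 = 8"
proof -
  define z :: complex where "z = of_int (int p + 1)"
  have norm_z: "cmod (z\<^sup>2) = (real p + 1)\<^sup>2" unfolding z_def norm_power norm_of_int by simp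
  have root_sq: "(cmod b)\<^sup>2 \<le> 4 * real p" if "poly (of_int_poly m) b = 0" for b
  proof -
    have "(cmod b)\<^sup>2 \<le> (2 * sqrt (real p))\<^sup>2"
      using fourier_coeff_int_min_poly_root(2)[OF assms(2,3) that] by (intro power_mono) auto
    thus ?thesis by (simp add: power_mult_distrib)
  qed
  have lower: "(real p + 1)\<^sup>2 - (cmod b)\<^sup>2 \<le> cmod (z\<^sup>2 - b\<^sup>2)" for b
    using norm_triangle_ineq2[of "z\<^sup>2" "b\<^sup>2"] norm_z by (simp add: norm_power)
  have "(real p + 1)\<^sup>2 - 4 * real p \<ge> 1"
    using \<open>2 \<le> p\<close> by (simp add: power2_eq_square algebra_simps)
  hence far: "1 \<le> cmod (z\<^sup>2 - b\<^sup>2)" if "poly (of_int_poly m) b = 0" for b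
    using lower[of b] root_sq[OF that] by linarith
  have "lead_coeff (of_int_poly m :: complex poly) = 1" and a_root: "poly (of_int_poly m) a = 0"
    using assms(3) by (simp_all add: int_min_poly_def)
  hence "cmod (z\<^sup>2 - a\<^sup>2) \<le> cmod (poly (of_int_poly m) z * poly (of_int_poly m) (-z))"
    using far by (rule norm_diff_squares_le_norm_poly_mult)
  also have "\<dots> = 1"
    using assms(4,5)
    unfolding z_def norm_mult of_int_minus[symmetric] of_int_hom.poly_map_poly norm_of_int
    by (simp flip: of_int_abs)
  finally have close: "(real p + 1)\<^sup>2 - (cmod a)\<^sup>2 \<le> 1" using lower[of a] by linarith
  hence "(real p + 1)\<^sup>2 - 4 * real p \<le> 1" using root_sq[OF a_root] by linarith
  hence "(real p - 1)\<^sup>2 \<le> 1\<^sup>2" by (simp add: power2_eq_square algebra_simps)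
  hence "p = 2" using \<open>2 \<le> p\<close> unfolding power2_le_iff_abs_le[OF zero_le_one] by simp
  obtain x where "a = of_real x"
    using fourier_coeff_int_min_poly_root(1)[OF assms(2,3) a_root] by (auto elim: Reals_cases)
  with close root_sq[OF a_root] \<open>p = 2\<close> have "x\<^sup>2 = 8" by simp
  with \<open>p = 2\<close> \<open>a = of_real x\<close> show ?thesis by (metis of_real_numeral of_real_power)
qed

lemma fourier_coeff_unit_diff_squares_imp:
  assumes "2 \<le> p" and "fourier_coeff p a"
    and unit: "alg_int_unit ((of_nat p + 1 + a) * (of_nat p + 1 - a))"
  shows "p = 2 \<and> a\<^sup>2 = 8"
proof -
  obtain m where m: "int_min_poly a m"
    using assms(2) alg_int_imp_int_min_poly unfolding fourier_coeff_def by blast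
  let ?t = "int p + 1"
  let ?Q = "[:?t\<^sup>2, 0, -1:]"
  have "(of_nat p + 1 + a) * (of_nat p + 1 - a) = poly (of_int_poly ?Q) a"
    by (simp add: algebra_simps power2_eq_square)
  with unit have unit_Q: "alg_int_unit (poly (of_int_poly ?Q) a)" by (simp only:)
  have "\<bar>poly m ?t\<bar> = 1"
    by (rule int_min_poly_eval_abs_eq_1_if_unit[OF m unit_Q]) (simp add: power2_eq_square algebra_simps)
  moreover have "\<bar>poly m (- ?t)\<bar> = 1"
    by (rule int_min_poly_eval_abs_eq_1_if_unit[OF m unit_Q]) (simp add: power2_eq_square algebra_simps)
  ultimately show ?thesis using assms(1,2) m by (rule fourier_coeff_int_min_poly_abs_eq_1_imp[rotated 3])
qed

lemma fourier_coeff_not_unit: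
  assumes "4 < p" and "fourier_coeff p a"
  shows "\<not> alg_int_unit (of_nat p + 1 + a)" and "\<not> alg_int_unit (of_nat p + 1 - a)"
proof -
  obtain m where m: "int_min_poly a m"
    using assms(2) alg_int_imp_int_min_poly unfolding fourier_coeff_def by blast
  let ?t = "int p + 1"
  have "\<bar>poly m t\<bar> \<noteq> 1" if "\<bar>t\<bar> = ?t" for t
    using fourier_coeff_int_min_poly_abs_gt_1[OF assms m that] by simp
  moreover have "of_nat p + 1 + a = poly (of_int_poly [:?t, 1:]) a"
    and "of_nat p + 1 - a = poly (of_int_poly [:?t, -1:]) a" by simp_all
  ultimately show "\<not> alg_int_unit (of_nat p + 1 + a)" and "\<not> alg_int_unit (of_nat p + 1 - a)"
    using int_min_poly_eval_abs_eq_1_if_unit[OF m, of "[:?t, 1:]" "- ?t"]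
      int_min_poly_eval_abs_eq_1_if_unit[OF m, of "[:?t, -1:]" ?t] by auto
qed

lemma alg_int_unit_1: "alg_int_unit 1"
  unfolding alg_int_unit_def alg_int_def by (auto intro!: exI[of _ "[:-1, 1:]"])

theorem lemma2p3:
  fixes p :: nat and a :: complex
  assumes "prime p" and "fourier_coeff p a"
  shows "(alg_int_unit ((of_nat p + 1 + a) * (of_nat p + 1 - a)) \<longleftrightarrow> (p = 2 \<and> a ^ 2 = 8))
     \<and> (p > 3 \<longrightarrow> \<not> alg_int_unit (of_nat p + 1 + a) \<and> \<not> alg_int_unit (of_nat p + 1 - a))"
proof (intro conjI impI)
  show "alg_int_unit ((of_nat p + 1 + a) * (of_nat p + 1 - a)) \<longleftrightarrow> p = 2 \<and> a\<^sup>2 = 8"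
  proof
    show "p = 2 \<and> a\<^sup>2 = 8" if "alg_int_unit ((of_nat p + 1 + a) * (of_nat p + 1 - a))"
      using prime_ge_2_nat[OF assms(1)] assms(2) that by (rule fourier_coeff_unit_diff_squares_imp)
    assume "p = 2 \<and> a\<^sup>2 = 8"
    hence "(of_nat p + 1 + a) * (of_nat p + 1 - a) = 1" by (simp add: algebra_simps power2_eq_square)
    thus "alg_int_unit ((of_nat p + 1 + a) * (of_nat p + 1 - a))" using alg_int_unit_1 by simp
  qed
  assume "3 < p"
  hence "4 < p" using assms(1) prime_product[of 2 2] by (cases "p = 4") auto
  thus "\<not> alg_int_unit (of_nat p + 1 + a)" and "\<not> alg_int_unit (of_nat p + 1 - a)"
    using assms(2) by (rule fourier_coeff_not_unit)+
qed

end
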